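(* Fix integers/reals $d\ge1$, $L\ge1$ and $q>d$. Then $\Phi(\mathcal{H}_L)\le C_{d,q}L^d$ for a finite constant $C_{d,q}$ depending only on $(d,q)$, and consequently $\mathbb{D}_{\mathrm{onl}}(\mathcal{H}_L)\le 4\cdot 2^{q-1}C_{d,q}L^d$.
   Context: $\mathcal{X}=[-1,1]^d$, $\mathcal{Y}=[0,1]$, $\mathcal{H}_L=\{h:\mathcal X\to[0,1]: |h(x)-h(x')|\le L\|x-x'\|_\infty\ \forall x,x'\}$. Loss $\ell_q(y,y')=|y-y'|^q$ ($q\ge1$), which is a $2^{q-1}$-approximate pseudo-metric; the induced metric is $d_\ell(f,g)=\sup_x\ell_q(f(x),g(x))=\|f-g\|_\infty^q$. $N(U,\varepsilon)$ is the minimal size of $S\subseteq\mathcal{H}_L$ with every $u\in U$ within $d_\ell$-distance $\le\varepsilon$ of $S$; $\Phi(U)=\int_0^{\operatorname{diam}(\mathcal{H}_L)}\log_2 N(U,\varepsilon)d\varepsilon$ where $\operatorname{diam}(\mathcal{H}_L)=\sup_{f,g}d_\ell(f,g)$. Online dimension $\mathbb{D}_{\mathrm{onl}}$: for scaled Littlestone trees (internal nodes $u\in\{0,1\}^{<D}$ labeled $x_u\in\mathcal X$, edges labeled $s_{u,0},s_{u,1}\in\mathcal Y$, gap $\gamma_u=\ell_q(s_{u,0},s_{u,1})$) realizable by $\mathcal{H}_L$ (every finite prefix of every branch consistent with some $h\in\mathcal H_L$, i.e. $h(x_{b_{\le t}})=s_{b_{\le t},b_{t+1}}$), $\mathbb{D}_{\mathrm{onl}}(\mathcal{H}_L)=\sup_{\mathcal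 T}\inf_b\sum_t\gamma_{b_{\le t}}$. *)

theory Defs
  imports "HOL-Analysis.Analysis" "HOL-Library.Extended_Nat"
begin

text \<open>Points of X = [-1,1]^d are represented as functions nat => real that lie in
  [-1,1] on the coordinates i < d and vanish on the coordinates i >= d.\<close>
definition cubeX :: "nat \<Rightarrow> (nat \<Rightarrow> real) set" where
  "cubeX d = {x. (\<forall>i<d. x i \<in> {-1..1}) \<and> (\<forall>i\<ge>d. x i = 0)}"

definition linf :: "nat \<Rightarrow> (nat \<Rightarrow> real) \<Rightarrow> (nat \<Rightarrow> real) \<Rightarrow> real" where
  "linf d x y = (MAX i\<in>{..<d}. \<bar>x i - y i\<bar>)"

definition HL :: "nat \<Rightarrow> real \<Rightarrow> ((nat \<Rightarrow> real) \<Rightarrow> real) set" where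
  "HL d L = {h. (\<forall>x\<in>cubeX d. h x \<in> {0..1})
              \<and> (\<forall>x\<in>cubeX d. \<forall>x'\<in>cubeX d. \<bar>h x - h x'\<bar> \<le> L * linf d x x')
              \<and> (\<forall>x. x \<notin> cubeX d \<longrightarrow> h x = 0)}"

definition lossq :: "real \<Rightarrow> real \<Rightarrow> real \<Rightarrow> real" where
  "lossq q y y' = \<bar>y - y'\<bar> powr q"

definition dl :: "nat \<Rightarrow> real \<Rightarrow> ((nat \<Rightarrow> real) \<Rightarrow> real) \<Rightarrow> ((nat \<Rightarrow> real) \<Rightarrow> real) \<Rightarrow> real" where
  "dl d q f g = (SUP x\<in>cubeX d. lossq q (f x) (g x))"

definition diamH :: "nat \<Rightarrow> real \<Rightarrow> real \<Rightarrow> real" where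
  "diamH d q L = (SUP fg\<in>HL d L \<times> HL d L. dl d q (fst fg) (snd fg))"

text \<open>covering number N(U, eps) with centers in H_L (infinite if no finite cover exists)\<close>
definition covnum :: "nat \<Rightarrow> real \<Rightarrow> real \<Rightarrow> ((nat \<Rightarrow> real) \<Rightarrow> real) set \<Rightarrow> real \<Rightarrow> ennreal" where
  "covnum d q L U eps = (INF S\<in>{S. finite S \<and> S \<subseteq> HL d L \<and> (\<forall>u\<in>U. \<exists>s\<in>S. dl d q u s \<le> eps)}.
                           of_nat (card S))"

definition log2N :: "ennreal \<Rightarrow> ennreal" where
  "log2N n = (if n = \<infinity> then \<infinity> else ennreal (log 2 (enn2real n)))"

definition Phi :: "nat \<Rightarrow> real \<Rightarrow> real \<Rightarrow> ((nat \<Rightarrow> real) \<Rightarrow> real) set \<Rightarrow> ennreal" where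
  "Phi d q L U = (\<integral>\<^sup>+ eps\<in>{0..diamH d q L}. log2N (covnum d q L U eps) \<partial>lborel)"

text \<open>Scaled Littlestone tree of depth D (possibly infinite): internal nodes are bool lists u
  of length < D, labelled by xl u in X; edges (u,b) labelled by sl u b in Y = [0,1].\<close>
definition realizable_tree ::
  "nat \<Rightarrow> real \<Rightarrow> enat \<Rightarrow> (bool list \<Rightarrow> (nat \<Rightarrow> real)) \<Rightarrow> (bool list \<Rightarrow> bool \<Rightarrow> real) \<Rightarrow> bool" where
  "realizable_tree d L D xl sl \<longleftrightarrow>
     (\<forall>u. enat (length u) < D \<longrightarrow> xl u \<in> cubeX d \<and> sl u False \<in> {0..1} \<and> sl u True \<in> {0..1})
   \<and> (\<forall>b::nat \<Rightarrow> bool. \<forall>n::nat. enat n \<le> D \<longrightarrow>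
        (\<exists>h\<in>HL d L. \<forall>t<n. h (xl (map b [0..<t])) = sl (map b [0..<t]) (b t)))"

definition branch_gap ::
  "real \<Rightarrow> enat \<Rightarrow> (bool list \<Rightarrow> bool \<Rightarrow> real) \<Rightarrow> (nat \<Rightarrow> bool) \<Rightarrow> ennreal" where
  "branch_gap q D sl b =
     (\<Sum>t. if enat t < D then ennreal (lossq q (sl (map b [0..<t]) False) (sl (map b [0..<t]) True)) else 0)"

definition Donl :: "nat \<Rightarrow> real \<Rightarrow> real \<Rightarrow> ennreal" where
  "Donl d q L = (SUP T\<in>{(D, xl, sl). realizable_tree d L D xl sl}.
                   (case T of (D, xl, sl) \<Rightarrow> (INF b. branch_gap q D sl b)))"

end

theory Submission
  imports Defs
begin

text \<open>Both bounds go through the cover entropy \<open>\<integral>\<^sub>0\<^sup>1 log\<^sub>2 N(U, e) de\<close>, which is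
  \<open>\<Phi>(U)\<close> because \<open>H_L\<close> has diameter 1.

  Recording the values of \<open>h \<in> H_L\<close> to precision \<open>\<delta>/3\<close>, where \<open>\<delta> = e^(1/q)\<close>, on a grid of
  mesh about \<open>\<delta>/(3L)\<close> determines \<open>h\<close> up to sup-distance \<open>\<delta>\<close>. Hence
  \<open>log\<^sub>2 N(H_L, e) = O(L^d e^(-(d + \<eta>)/q))\<close> for any \<open>0 < \<eta> < q - d\<close>, which is integrable
  at 0 because \<open>(d + \<eta>)/q < 1\<close>; so \<open>\<Phi>(H_L) \<le> C L^d\<close>.

  On a realizable tree the cover entropy of the version space is a potential. At a node with
  labels \<open>s0, s1\<close> the two child version spaces differ by \<open>|s0 - s1|^q\<close> at the node's point, so
  for \<open>e < |s0 - s1|^q / 2^q\<close> no centre covers both and \<open>N(V0, e) + N(V1, e) \<le> N(V, e)\<close>.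
  Since \<open>log a + log b + 2 \<le> 2 log (a + b)\<close>, the child of smaller potential has potential at
  most that of \<open>V\<close> minus \<open>|s0 - s1|^q / 2^q\<close>. Always descending into that child gives a branch
  whose gaps sum to at most \<open>2^q \<Phi>(H_L)\<close>.\<close>

lemma zero_in_cubeX: "(\<lambda>_. 0) \<in> cubeX d"
  by (simp add: cubeX_def)

lemma HL_range:
  assumes "h \<in> HL d L" "x \<in> cubeX d"
  shows "0 \<le> h x" "h x \<le> 1"
  using assms by (auto simp: HL_def)

lemma HL_lipschitz:
  assumes "h \<in> HL d L" "x \<in> cubeX d" "x' \<in> cubeX d"
  shows "\<bar>h x - h x'\<bar> \<le> L * linf d x x'"
  using assms by (auto simp: HL_def)

lemma linf_nonneg: "1 \<le> d \<Longrightarrow> 0 \<le> linf d x y"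
  unfolding linf_def by (rule order.trans[OF _ Max_ge[where x="\<bar>x 0 - y 0\<bar>"]]) auto

lemma linf_le:
  assumes "1 \<le> d" "\<And>i. i < d \<Longrightarrow> \<bar>x i - y i\<bar> \<le> r"
  shows "linf d x y \<le> r"
  using assms unfolding linf_def by (subst Max_le_iff) (auto simp: lessThan_empty_iff)

lemma zero_in_HL: "1 \<le> d \<Longrightarrow> 0 \<le> L \<Longrightarrow> (\<lambda>_. 0) \<in> HL d L"
  by (auto simp: HL_def linf_nonneg)

lemma indicator_cubeX_in_HL: "1 \<le> d \<Longrightarrow> 0 \<le> L \<Longrightarrow> indicator (cubeX d) \<in> HL d L"
  by (auto simp: HL_def indicator_def linf_nonneg)

lemma lossq_nonneg: "0 \<le> lossq q a b"
  by (simp add: lossq_def)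

lemma lossq_le_1:
  assumes "a \<in> {0..1}" "b \<in> {0..1}" "0 \<le> q"
  shows "lossq q a b \<le> 1"
proof -
  have "\<bar>a - b\<bar> powr q \<le> 1 powr q"
    using assms by (intro powr_mono2) auto
  then show ?thesis by (simp add: lossq_def)
qed

lemma lossq_le_max:
  assumes "0 \<le> q"
  shows "lossq q a c \<le> 2 powr q * max (lossq q a b) (lossq q c b)"
proof -
  have "\<bar>a - c\<bar> \<le> 2 * max \<bar>a - b\<bar> \<bar>c - b\<bar>" by (simp add: max_def abs_if)
  then have "\<bar>a - c\<bar> powr q \<le> (2 * max \<bar>a - b\<bar> \<bar>c - b\<bar>) powr q"
    using assms by (intro powr_mono2) auto
  also have "\<dots> = 2 powr q * max \<bar>a - b\<bar> \<bar>c - b\<bar> powr q"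
    by (simp add: powr_mult)
  also have "\<dots> \<le> 2 powr q * max (\<bar>a - b\<bar> powr q) (\<bar>c - b\<bar> powr q)"
    by (cases "\<bar>a - b\<bar> \<le> \<bar>c - b\<bar>") (auto simp: max_def)
  finally show ?thesis by (simp add: lossq_def)
qed

lemma lossq_le_dl:
  assumes "f \<in> HL d L" "g \<in> HL d L" "x \<in> cubeX d" "0 \<le> q"
  shows "lossq q (f x) (g x) \<le> dl d q f g"
  unfolding dl_def
proof (rule cSUP_upper)
  show "bdd_above ((\<lambda>x. lossq q (f x) (g x)) ` cubeX d)"
    using assms HL_range by (intro bdd_aboveI2[where M=1] lossq_le_1) auto
qed (fact assms)

lemma dl_leI:
  assumes "\<And>x. x \<in> cubeX d \<Longrightarrow> lossq q (f x) (g x) \<le> e"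
  shows "dl d q f g \<le> e"
  unfolding dl_def using assms zero_in_cubeX by (intro cSUP_least) auto

lemma dl_le_1:
  assumes "f \<in> HL d L" "g \<in> HL d L" "0 \<le> q"
  shows "dl d q f g \<le> 1"
  using assms HL_range by (intro dl_leI lossq_le_1) auto

lemma diamH_eq_1:
  assumes "1 \<le> d" "0 \<le> L" "0 < q"
  shows "diamH d q L = 1"
  unfolding diamH_def
proof (rule antisym)
  show "(SUP fg\<in>HL d L \<times> HL d L. dl d q (fst fg) (snd fg)) \<le> 1"
    using assms zero_in_HL[of d L] dl_le_1 by (intro cSUP_least) auto
  have "1 \<le> dl d q (indicator (cubeX d)) (\<lambda>_. 0)"
    using lossq_le_dl[OF indicator_cubeX_in_HL zero_in_HL zero_in_cubeX] assms
    by (simp add: lossq_def zero_in_cubeX)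
  also have "\<dots> \<le> (SUP fg\<in>HL d L \<times> HL d L. dl d q (fst fg) (snd fg))"
    using assms zero_in_HL indicator_cubeX_in_HL dl_le_1
    by (intro cSUP_upper2[where x="(indicator (cubeX d), \<lambda>_. 0)"] bdd_aboveI2[where M=1]) auto
  finally show "1 \<le> (SUP fg\<in>HL d L \<times> HL d L. dl d q (fst fg) (snd fg))" .
qed

section \<open>Covering numbers\<close>

definition is_cover ::
  "nat \<Rightarrow> real \<Rightarrow> real \<Rightarrow> ((nat \<Rightarrow> real) \<Rightarrow> real) set \<Rightarrow> real \<Rightarrow> ((nat \<Rightarrow> real) \<Rightarrow> real) set \<Rightarrow> bool"
  where "is_cover d q L U e S \<longleftrightarrow> finite S \<and> S \<subseteq> HL d L \<and> (\<forall>u\<in>U. \<exists>s\<in>S. dl d q u s \<le> e)"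

lemma covnum_eq_INF: "covnum d q L U e = (INF S\<in>{S. is_cover d q L U e S}. of_nat (card S))"
  by (simp add: covnum_def is_cover_def)

lemma covnum_le_card: "is_cover d q L U e S \<Longrightarrow> covnum d q L U e \<le> of_nat (card S)"
  unfolding covnum_eq_INF by (rule INF_lower) simp

lemma covnum_mono: "U \<subseteq> U' \<Longrightarrow> covnum d q L U e \<le> covnum d q L U' e"
  unfolding covnum_eq_INF by (rule INF_superset_mono) (auto simp: is_cover_def subset_iff)

lemma covnum_antimono: "e \<le> e' \<Longrightarrow> covnum d q L U e' \<le> covnum d q L U e"
  unfolding covnum_eq_INF by (rule INF_superset_mono) (auto simp: is_cover_def subset_iff, meson order_trans)

lemma covnum_ge_1: "U \<noteq> {} \<Longrightarrow> 1 \<le> covnum d q L U e"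
  unfolding covnum_eq_INF by (intro INF_greatest) (auto simp: is_cover_def Suc_le_eq card_gt_0_iff)

lemma covnum_le_card_of_fibres:
  assumes "U \<subseteq> HL d L" "p ` U \<subseteq> P" "finite P"
    and "\<And>h h'. h \<in> U \<Longrightarrow> h' \<in> U \<Longrightarrow> p h = p h' \<Longrightarrow> dl d q h h' \<le> e"
  shows "covnum d q L U e \<le> of_nat (card P)"
proof -
  define S where "S = inv_into U p ` p ` U"
  have "finite (p ` U)" using assms(2,3) by (rule finite_subset)
  have "S \<subseteq> U" unfolding S_def by (auto intro: inv_into_into)
  have "is_cover d q L U e S"
    unfolding is_cover_def
  proof (intro conjI ballI)
    show "finite S" unfolding S_def using \<open>finite (p ` U)\<close> by (rule finite_imageI)
    show "S \<subseteq> HL d L" using \<open>S \<subseteq> U\<close> assms(1) by (rule order_trans)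
    fix h assume "h \<in> U"
    then have "inv_into U p (p h) \<in> U" "p h = p (inv_into U p (p h))"
      by (simp_all add: inv_into_into f_inv_into_f)
    then have "dl d q h (inv_into U p (p h)) \<le> e"
      using \<open>h \<in> U\<close> by (intro assms(4))
    then show "\<exists>s\<in>S. dl d q h s \<le> e" unfolding S_def using \<open>h \<in> U\<close> by blast
  qed
  then have "covnum d q L U e \<le> of_nat (card S)" by (rule covnum_le_card)
  also have "\<dots> \<le> of_nat (card P)"
  proof (rule of_nat_mono)
    show "card S \<le> card P"
      using card_image_le[OF \<open>finite (p ` U)\<close>] card_mono[OF assms(3,2)] unfolding S_def
      by (rule order_trans)
  qed
  finally show ?thesis .
qed

lemma is_cover_restrict:
  assumes "is_cover d q L V e S" "U \<subseteq> V"
  shows "is_cover d q L U e {s\<in>S. \<exists>u\<in>U. dl d q u s \<le> e}"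
  unfolding is_cover_def
proof (intro conjI ballI)
  show "finite {s\<in>S. \<exists>u\<in>U. dl d q u s \<le> e}" "{s\<in>S. \<exists>u\<in>U. dl d q u s \<le> e} \<subseteq> HL d L"
    using assms(1) by (auto simp: is_cover_def)
  fix u assume "u \<in> U"
  then obtain s where "s \<in> S" "dl d q u s \<le> e" using assms unfolding is_cover_def by blast
  then show "\<exists>s\<in>{s\<in>S. \<exists>u\<in>U. dl d q u s \<le> e}. dl d q u s \<le> e" using \<open>u \<in> U\<close> by blast
qed

text \<open>No centre is within \<open>e\<close> of both sides of a split whose gap exceeds \<open>2\<^sup>q e\<close>, so a
  cover of \<open>V\<close> splits into disjoint covers of \<open>V0\<close> and \<open>V1\<close>.\<close>
lemma covnum_split_le:
  assumes "V0 \<subseteq> V" "V1 \<subseteq> V" "V \<subseteq> HL d L" "x \<in> cubeX d"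
    and "\<forall>h\<in>V0. h x = s0" "\<forall>h\<in>V1. h x = s1" "0 \<le> q" "2 powr q * e < lossq q s0 s1"
  shows "covnum d q L V0 e + covnum d q L V1 e \<le> covnum d q L V e"
  unfolding covnum_eq_INF[of d q L V]
proof (rule INF_greatest, clarify)
  fix S assume S: "is_cover d q L V e S"
  define S0 where "S0 = {s\<in>S. \<exists>u\<in>V0. dl d q u s \<le> e}"
  define S1 where "S1 = {s\<in>S. \<exists>u\<in>V1. dl d q u s \<le> e}"
  have covers: "is_cover d q L V0 e S0" "is_cover d q L V1 e S1"
    unfolding S0_def S1_def using S assms(1,2) by (blast intro: is_cover_restrict)+
  have "S0 \<inter> S1 = {}"
  proof (rule ccontr)
    assume "S0 \<inter> S1 \<noteq> {}"
    then obtain s u0 u1 where s: "s \<in> S" "u0 \<in> V0" "u1 \<in> V1" "dl d q u0 s \<le> e" "dl d q u1 s \<le> e"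
      unfolding S0_def S1_def by blast
    moreover have "s \<in> HL d L" "u0 \<in> HL d L" "u1 \<in> HL d L"
      using S s(1-3) assms(1-3) unfolding is_cover_def by blast+
    ultimately have "lossq q (u0 x) (s x) \<le> e" "lossq q (u1 x) (s x) \<le> e"
      using lossq_le_dl[OF _ _ assms(4,7)] by (meson order_trans)+
    then have "2 powr q * max (lossq q (u0 x) (s x)) (lossq q (u1 x) (s x)) \<le> 2 powr q * e"
      by (intro mult_left_mono) auto
    then have "lossq q (u0 x) (u1 x) \<le> 2 powr q * e"
      using lossq_le_max[OF assms(7), of "u0 x" "u1 x" "s x"] by linarith
    then show False using assms(5,6,8) s(2,3) by auto
  qed
  then have "card S0 + card S1 = card (S0 \<union> S1)"
    using covers by (intro card_Un_disjoint[symmetric]) (auto simp: is_cover_def)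
  also have "\<dots> \<le> card S"
    using S by (intro card_mono) (auto simp: is_cover_def S0_def S1_def)
  finally have "of_nat (card S0) + of_nat (card S1) \<le> (of_nat (card S) :: ennreal)"
    by (metis of_nat_add of_nat_le_iff)
  then show "covnum d q L V0 e + covnum d q L V1 e \<le> of_nat (card S)"
    using covnum_le_card[OF covers(1)] covnum_le_card[OF covers(2)]
    by (meson add_mono order_trans)
qed

lemma log2N_ennreal: "0 \<le> r \<Longrightarrow> log2N (ennreal r) = ennreal (log 2 r)"
  by (simp add: log2N_def)

lemma log2N_of_nat: "log2N (of_nat n) = ennreal (log 2 (real n))"
  by (simp add: log2N_def)

lemma log2N_mono:
  assumes "a \<le> b"
  shows "log2N a \<le> log2N b"
proof (cases b)
  case (real rb)
  then obtain ra where ra: "a = ennreal ra" "0 \<le> ra" "ra \<le> rb"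
    using assms by (cases a) (auto simp: top_unique)
  have "ennreal (log 2 ra) \<le> ennreal (log 2 rb)"
  proof (cases "ra = 0")
    case True
    then show ?thesis by (simp add: log_def)
  next
    case False
    then show ?thesis using ra by (intro ennreal_leI) simp
  qed
  then show ?thesis using ra real by (simp add: log2N_ennreal)
qed (simp add: log2N_def)

lemma log2_add_le:
  fixes a b :: real
  assumes "0 < a" "0 < b"
  shows "log 2 a + log 2 b + 2 \<le> 2 * log 2 (a + b)"
proof -
  have "log 2 4 = (2::real)" using log_pow_cancel[of 2 2] by simp
  then have "log 2 a + log 2 b + 2 = log 2 (4 * a * b)"
    using assms by (simp add: log_mult)
  also have "\<dots> \<le> log 2 ((a + b) ^ 2)"
  proof -
    have "0 \<le> (a - b) ^ 2" by simp
    then have "4 * a * b \<le> (a + b) ^ 2" by (simp add: power2_eq_square algebra_simps)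
    then show ?thesis using assms by simp
  qed
  also have "\<dots> = 2 * log 2 (a + b)"
    using assms by (simp add: log_nat_power)
  finally show ?thesis .
qed

lemma log2N_add_le:
  assumes "1 \<le> a" "1 \<le> b"
  shows "log2N a + log2N b + 2 \<le> 2 * log2N (a + b)"
proof (cases "a = \<infinity> \<or> b = \<infinity>")
  case True
  then show ?thesis by (auto simp: log2N_def ennreal_mult_top)
next
  case False
  then obtain ra rb where ab: "a = ennreal ra" "b = ennreal rb" "1 \<le> ra" "1 \<le> rb"
    using assms by (cases a; cases b) auto
  then have "0 \<le> log 2 ra" "0 \<le> log 2 rb" by simp_all
  then have "log2N a + log2N b + 2 = ennreal (log 2 ra + log 2 rb + 2)"
    using ab by (simp add: log2N_ennreal)
  also have "\<dots> \<le> ennreal (2 * log 2 (ra + rb))"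
    using ab by (intro ennreal_leI log2_add_le) auto
  also have "\<dots> = 2 * log2N (a + b)"
    using ab by (simp add: log2N_ennreal ennreal_mult' ennreal_plus[symmetric] del: ennreal_plus)
  finally show ?thesis .
qed

lemma log2N_covnum_split_le:
  assumes "V0 \<subseteq> V" "V1 \<subseteq> V" "V \<subseteq> HL d L" "x \<in> cubeX d" "V0 \<noteq> {}" "V1 \<noteq> {}"
    and "\<forall>h\<in>V0. h x = s0" "\<forall>h\<in>V1. h x = s1" "0 \<le> q" "2 powr q * e < lossq q s0 s1"
  shows "log2N (covnum d q L V0 e) + log2N (covnum d q L V1 e) + 2 \<le> 2 * log2N (covnum d q L V e)"
proof -
  have "log2N (covnum d q L V0 e) + log2N (covnum d q L V1 e) + 2
      \<le> 2 * log2N (covnum d q L V0 e + covnum d q L V1 e)"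
    using assms(5,6) by (intro log2N_add_le covnum_ge_1)
  also have "\<dots> \<le> 2 * log2N (covnum d q L V e)"
    using covnum_split_le[OF assms(1-4,7-10)] by (intro mult_left_mono log2N_mono) auto
  finally show ?thesis .
qed

section \<open>The cover entropy as a potential on Littlestone trees\<close>

lemma borel_measurable_antimono_ennreal:
  fixes F :: "real \<Rightarrow> ennreal"
  assumes "antimono F"
  shows "F \<in> borel_measurable borel"
proof (rule borel_measurableI_greater)
  fix y
  have "is_interval {x. y < F x}"
    using assms unfolding is_interval_1 antimono_def by (auto intro: order.strict_trans2)
  then show "{x \<in> space borel. y < F x} \<in> sets borel"
    by (simp add: real_interval_borel_measurable)
qed

lemma borel_measurable_log2N_covnum [measurable]:
  "(\<lambda>e. log2N (covnum d q L U e)) \<in> borel_measurable lborel"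
  using borel_measurable_antimono_ennreal[of "\<lambda>e. log2N (covnum d q L U e)"]
  by (simp add: antimono_def log2N_mono covnum_antimono)

definition cover_entropy :: "nat \<Rightarrow> real \<Rightarrow> real \<Rightarrow> ((nat \<Rightarrow> real) \<Rightarrow> real) set \<Rightarrow> ennreal" where
  "cover_entropy d q L U = (\<integral>\<^sup>+ e\<in>{0..1}. log2N (covnum d q L U e) \<partial>lborel)"

lemma Phi_eq_cover_entropy:
  "1 \<le> d \<Longrightarrow> 0 \<le> L \<Longrightarrow> 0 < q \<Longrightarrow> Phi d q L U = cover_entropy d q L U"
  by (simp add: Phi_def cover_entropy_def diamH_eq_1)

lemma cover_entropy_mono: "U \<subseteq> U' \<Longrightarrow> cover_entropy d q L U \<le> cover_entropy d q L U'"
  unfolding cover_entropy_def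
  by (intro nn_integral_mono mult_right_mono log2N_mono covnum_mono) auto

lemma cover_entropy_split_le:
  assumes "V0 \<subseteq> V" "V1 \<subseteq> V" "V \<subseteq> HL d L" "x \<in> cubeX d" "V0 \<noteq> {}" "V1 \<noteq> {}"
    and "\<forall>h\<in>V0. h x = s0" "\<forall>h\<in>V1. h x = s1" "0 < q" "s0 \<in> {0..1}" "s1 \<in> {0..1}"
  shows "cover_entropy d q L V0 + cover_entropy d q L V1 + 2 * ennreal (lossq q s0 s1 / 2 powr q)
         \<le> 2 * cover_entropy d q L V"
proof -
  define c where "c = lossq q s0 s1 / 2 powr q"
  define N where "N W e = log2N (covnum d q L W e)" for W e
  have "lossq q s0 s1 \<le> 1" using assms(9-11) lossq_le_1 by simp
  moreover have "1 \<le> 2 powr q" using assms(9) by (simp add: ge_one_powr_ge_zero)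
  ultimately have c: "0 \<le> c" "c \<le> 1" unfolding c_def by (simp_all add: lossq_nonneg)
  have split: "N V0 e + N V1 e + 2 * indicator {..<c} e \<le> 2 * N V e" for e
  proof (cases "e < c")
    case True
    then have "2 powr q * e < lossq q s0 s1" unfolding c_def by (simp add: field_simps)
    then show ?thesis
      using True log2N_covnum_split_le[OF assms(1-8) less_imp_le[OF assms(9)]] by (simp add: N_def)
  next
    case False
    have "N V0 e \<le> N V e" "N V1 e \<le> N V e"
      unfolding N_def using assms(1,2) by (intro log2N_mono covnum_mono; simp)+
    then show ?thesis using False by (simp add: mult_2 add_mono)
  qed
  have "cover_entropy d q L V0 + cover_entropy d q L V1 + 2 * ennreal c
      = (\<integral>\<^sup>+ e. (N V0 e + N V1 e + 2 * indicator {..<c} e) * indicator {0..1} e \<partial>lborel)"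
  proof -
    have "indicator {..<c} e * indicator {0..1} e = (indicator {0..<c} e :: ennreal)" for e
      using c by (auto split: split_indicator)
    then show ?thesis
      using c by (simp add: cover_entropy_def N_def nn_integral_add distrib_right mult.assoc
          nn_integral_cmult nn_integral_cmult_indicator)
  qed
  also have "\<dots> \<le> (\<integral>\<^sup>+ e. 2 * N V e * indicator {0..1} e \<partial>lborel)"
    by (intro nn_integral_mono mult_right_mono split) simp
  also have "\<dots> = 2 * cover_entropy d q L V"
    by (simp add: cover_entropy_def N_def mult.assoc nn_integral_cmult)
  finally show ?thesis unfolding c_def .
qed

primrec greedy_path :: "('a list \<Rightarrow> 'a) \<Rightarrow> nat \<Rightarrow> 'a list" where
  "greedy_path f 0 = []"
| "greedy_path f (Suc n) = greedy_path f n @ [f (greedy_path f n)]"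

lemma greedy_path_eq_map: "greedy_path f n = map (\<lambda>t. f (greedy_path f t)) [0..<n]"
  by (induction n) auto

lemma exists_branch_suminf_le:
  fixes P g :: "'a list \<Rightarrow> ennreal"
  assumes "\<And>u. \<exists>c. P (u @ [c]) + g u \<le> P u"
  shows "\<exists>b. (\<Sum>t. g (map b [0..<t])) \<le> P []"
proof -
  obtain f where f: "\<And>u. P (u @ [f u]) + g u \<le> P u" using assms by metis
  define b where "b t = f (greedy_path f t)" for t
  have path: "map b [0..<t] = greedy_path f t" for t
    unfolding b_def by (simp add: greedy_path_eq_map[of f t])
  have partial: "(\<Sum>t<n. g (greedy_path f t)) + P (greedy_path f n) \<le> P []" for n
  proof (induction n)
    case (Suc n)
    have "(\<Sum>t<Suc n. g (greedy_path f t)) + P (greedy_path f (Suc n))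
        = (\<Sum>t<n. g (greedy_path f t)) + (P (greedy_path f n @ [f (greedy_path f n)]) + g (greedy_path f n))"
      by (simp add: add_ac)
    also have "\<dots> \<le> (\<Sum>t<n. g (greedy_path f t)) + P (greedy_path f n)"
      by (intro add_left_mono f)
    also have "\<dots> \<le> P []" by (rule Suc.IH)
    finally show ?case .
  qed simp
  have "(\<Sum>t. g (greedy_path f t)) \<le> P []"
  proof (rule suminf_le_const)
    fix n
    show "(\<Sum>t<n. g (greedy_path f t)) \<le> P []"
      using partial[of n] by (meson add_increasing2 order_refl order_trans zero_le)
  qed simp
  then show ?thesis unfolding path[symmetric] by blast
qed

definition version_space ::
  "nat \<Rightarrow> real \<Rightarrow> (bool list \<Rightarrow> (nat \<Rightarrow> real)) \<Rightarrow> (bool list \<Rightarrow> bool \<Rightarrow> real) \<Rightarrow> bool list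
   \<Rightarrow> ((nat \<Rightarrow> real) \<Rightarrow> real) set" where
  "version_space d L xl sl u = {h \<in> HL d L. \<forall>t<length u. h (xl (take t u)) = sl (take t u) (u ! t)}"

lemma version_space_Nil: "version_space d L xl sl [] = HL d L"
  by (simp add: version_space_def)

lemma version_space_subset_HL: "version_space d L xl sl u \<subseteq> HL d L"
  by (auto simp: version_space_def)

lemma version_space_snoc:
  "version_space d L xl sl (u @ [c]) = {h \<in> version_space d L xl sl u. h (xl u) = sl u c}"
  by (auto simp: version_space_def nth_append less_Suc_eq)

lemma version_space_nonempty:
  assumes "realizable_tree d L D xl sl" "enat (length u) < D"
  shows "version_space d L xl sl (u @ [c]) \<noteq> {}"
proof -
  define b where "b t = (u @ [c]) ! t" for t
  have "enat (Suc (length u)) \<le> D" using assms(2) by (simp add: Suc_ile_eq)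
  then obtain h where h: "h \<in> HL d L" "\<forall>t<Suc (length u). h (xl (map b [0..<t])) = sl (map b [0..<t]) (b t)"
    using assms(1) unfolding realizable_tree_def by blast
  have "map b [0..<t] = take t (u @ [c])" if "t < Suc (length u)" for t
    using that by (intro nth_equalityI) (auto simp: b_def nth_append)
  then have "h \<in> version_space d L xl sl (u @ [c])"
    using h by (auto simp: version_space_def b_def)
  then show ?thesis by blast
qed

definition node_gap :: "real \<Rightarrow> enat \<Rightarrow> (bool list \<Rightarrow> bool \<Rightarrow> real) \<Rightarrow> bool list \<Rightarrow> ennreal" where
  "node_gap q D sl u = (if enat (length u) < D then ennreal (lossq q (sl u False) (sl u True)) else 0)"

lemma branch_gap_eq_suminf_node_gap: "branch_gap q D sl b = (\<Sum>t. node_gap q D sl (map b [0..<t]))"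
  by (simp add: branch_gap_def node_gap_def)

lemma version_space_descent:
  assumes "realizable_tree d L D xl sl" "0 < q"
  shows "\<exists>c. ennreal (2 powr q) * cover_entropy d q L (version_space d L xl sl (u @ [c])) + node_gap q D sl u
           \<le> ennreal (2 powr q) * cover_entropy d q L (version_space d L xl sl u)"
proof (cases "enat (length u) < D")
  case False
  have "cover_entropy d q L (version_space d L xl sl (u @ [False]))
      \<le> cover_entropy d q L (version_space d L xl sl u)"
    by (intro cover_entropy_mono) (auto simp: version_space_snoc)
  then show ?thesis
    using False by (intro exI[of _ False]) (simp add: node_gap_def mult_left_mono)
next
  case True
  define a where "a c = cover_entropy d q L (version_space d L xl sl (u @ [c]))" for c
  define E where "E = cover_entropy d q L (version_space d L xl sl u)"
  define G where "G = lossq q (sl u False) (sl u True)"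
  have node: "xl u \<in> cubeX d" "sl u False \<in> {0..1}" "sl u True \<in> {0..1}"
    using assms(1) True unfolding realizable_tree_def by auto
  have "a False + a True + 2 * ennreal (G / 2 powr q) \<le> 2 * E"
    unfolding a_def E_def G_def
    using version_space_nonempty[OF assms(1) True] assms(2) node
    by (intro cover_entropy_split_le[OF _ _ version_space_subset_HL node(1)])
       (auto simp: version_space_snoc)
  moreover obtain c where "2 * a c \<le> a False + a True"
    by (metis add_mono mult_2 nle_le)
  ultimately have "2 * (a c + ennreal (G / 2 powr q)) \<le> 2 * E"
    by (simp add: distrib_left) (meson add_right_mono order_trans)
  then have "a c + ennreal (G / 2 powr q) \<le> E"
    by (subst (asm) ennreal_mult_le_mult_iff) auto
  then have "ennreal (2 powr q) * (a c + ennreal (G / 2 powr q)) \<le> ennreal (2 powr q) * E"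
    by (rule mult_left_mono) simp
  moreover have "ennreal (2 powr q) * ennreal (G / 2 powr q) = ennreal G"
    by (simp add: ennreal_mult[symmetric] G_def lossq_nonneg)
  ultimately have "ennreal (2 powr q) * a c + ennreal G \<le> ennreal (2 powr q) * E"
    by (simp add: distrib_left)
  then show ?thesis using True unfolding a_def E_def G_def node_gap_def by auto
qed

lemma INF_branch_gap_le:
  assumes "realizable_tree d L D xl sl" "0 < q"
  shows "(INF b. branch_gap q D sl b) \<le> ennreal (2 powr q) * cover_entropy d q L (HL d L)"
proof -
  obtain b where "(\<Sum>t. node_gap q D sl (map b [0..<t]))
      \<le> ennreal (2 powr q) * cover_entropy d q L (version_space d L xl sl [])"
    using exists_branch_suminf_le[OF version_space_descent[OF assms]] by blast
  then show ?thesis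
    by (simp add: branch_gap_eq_suminf_node_gap version_space_Nil INF_lower2)
qed

lemma Donl_le_cover_entropy:
  "0 < q \<Longrightarrow> Donl d q L \<le> ennreal (2 powr q) * cover_entropy d q L (HL d L)"
  unfolding Donl_def by (rule SUP_least) (auto intro: INF_branch_gap_le)


section \<open>Covering numbers of Lipschitz classes\<close>

lemma grid_coordinate_near:
  assumes "0 < m" "-1 \<le> x" "x \<le> 1"
  shows "\<exists>k\<le>m. \<bar>x - (-1 + 2 * real k / real m)\<bar> \<le> 1 / real m"
proof -
  define y where "y = (x + 1) * real m / 2"
  have "(x + 1) * real m \<le> 2 * real m" using assms by (intro mult_right_mono) auto
  then have y: "0 \<le> y" "y \<le> real m" using assms unfolding y_def by simp_all
  define k where "k = nat (round y)"
  have "0 \<le> round y" using y(1) by (metis round_0 round_mono)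
  then have k: "real k = of_int (round y)" unfolding k_def by simp
  have "k \<le> m" using round_mono[OF y(2)] unfolding k_def by simp
  have "\<bar>y - of_int (round y)\<bar> \<le> 1 / 2"
    using of_int_round_abs_le[of y] by (simp add: abs_minus_commute)
  then have "2 * \<bar>y - of_int (round y)\<bar> / real m \<le> 1 / real m"
    using assms(1) by (intro divide_right_mono) auto
  moreover have "x - (-1 + 2 * real k / real m) = 2 * (y - of_int (round y)) / real m"
    using assms(1) unfolding k y_def by (simp add: field_simps)
  then have "\<bar>x - (-1 + 2 * real k / real m)\<bar> = 2 * \<bar>y - of_int (round y)\<bar> / real m"
    by (simp only: abs_divide abs_mult abs_numeral abs_of_nat)
  ultimately show ?thesis using \<open>k \<le> m\<close> by auto
qed

definition grid_point :: "nat \<Rightarrow> nat \<Rightarrow> (nat \<Rightarrow> nat) \<Rightarrow> nat \<Rightarrow> real" where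
  "grid_point d m k = (\<lambda>i. if i < d then -1 + 2 * real (k i) / real m else 0)"

lemma grid_point_in_cubeX:
  assumes "0 < m" "k \<in> PiE {..<d} (\<lambda>_. {0..m})"
  shows "grid_point d m k \<in> cubeX d"
proof -
  have "0 \<le> 2 * real (k i) / real m \<and> 2 * real (k i) / real m \<le> 2" if "i < d" for i
  proof -
    have "k i \<le> m" using PiE_mem[OF assms(2)] that by simp
    then show ?thesis using assms(1) by (simp add: pos_divide_le_eq)
  qed
  then show ?thesis unfolding cubeX_def grid_point_def by simp
qed

lemma grid_net:
  assumes "1 \<le> d" "0 < m"
  shows "\<exists>G. finite G \<and> G \<subseteq> cubeX d \<and> card G \<le> (m + 1) ^ d
             \<and> (\<forall>x\<in>cubeX d. \<exists>g\<in>G. linf d x g \<le> 1 / real m)"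
proof (intro exI conjI ballI)
  define I where "I = PiE {..<d} (\<lambda>_. {0..m})"
  show "finite (grid_point d m ` I)" unfolding I_def by (simp add: finite_PiE)
  show "grid_point d m ` I \<subseteq> cubeX d" unfolding I_def using grid_point_in_cubeX assms(2) by blast
  show "card (grid_point d m ` I) \<le> (m + 1) ^ d"
    using card_image_le[of I "grid_point d m"] unfolding I_def by (simp add: finite_PiE card_PiE)
  fix x assume "x \<in> cubeX d"
  then have "\<forall>i\<in>{..<d}. \<exists>k\<le>m. \<bar>x i - (-1 + 2 * real k / real m)\<bar> \<le> 1 / real m"
    using assms(2) grid_coordinate_near by (auto simp: cubeX_def)
  from bchoice[OF this] obtain k
    where k: "\<forall>i\<in>{..<d}. k i \<le> m \<and> \<bar>x i - (-1 + 2 * real (k i) / real m)\<bar> \<le> 1 / real m"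
    by blast
  have "restrict k {..<d} \<in> I" using k unfolding I_def by auto
  moreover have "linf d x (grid_point d m (restrict k {..<d})) \<le> 1 / real m"
    using k assms(1) by (intro linf_le) (auto simp: grid_point_def)
  ultimately show "\<exists>g\<in>grid_point d m ` I. linf d x g \<le> 1 / real m" by blast
qed

lemma nat_floor_eq_imp_dist_less:
  fixes a b :: real
  assumes "0 \<le> a" "0 \<le> b" "nat \<lfloor>a\<rfloor> = nat \<lfloor>b\<rfloor>"
  shows "\<bar>a - b\<bar> < 1"
proof -
  have "\<lfloor>a\<rfloor> = \<lfloor>b\<rfloor>" using assms by (simp add: nat_eq_iff2)
  then show ?thesis by linarith
qed

text \<open>Functions in \<open>H_L\<close> whose values on a \<open>w/L\<close>-net \<open>G\<close> fall into the same bins of width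
  \<open>w\<close> are \<open>3w\<close>-close everywhere.\<close>
lemma covnum_HL_le_quantized:
  assumes "finite G" "G \<subseteq> cubeX d" "0 < w" "0 \<le> q"
    and net: "\<forall>x\<in>cubeX d. \<exists>g\<in>G. L * linf d x g \<le> w"
  shows "covnum d q L (HL d L) ((3 * w) powr q) \<le> of_nat ((nat \<lfloor>1 / w\<rfloor> + 1) ^ card G)"
proof -
  define bin where "bin h = restrict (\<lambda>g. nat \<lfloor>h g / w\<rfloor>) G" for h :: "(nat \<Rightarrow> real) \<Rightarrow> real"
  define P where "P = PiE G (\<lambda>_. {0..nat \<lfloor>1 / w\<rfloor>})"
  have "bin ` HL d L \<subseteq> P"
  proof (clarsimp simp: bin_def P_def)
    fix h g assume "h \<in> HL d L" "g \<in> G"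
    then have "h g \<le> 1" using HL_range(2) assms(2) by blast
    then have "h g / w \<le> 1 / w" using assms(3) by (simp add: divide_right_mono)
    then show "nat \<lfloor>h g / w\<rfloor> \<le> nat \<lfloor>1 / w\<rfloor>" by (intro nat_mono floor_mono)
  qed
  moreover have "finite P" unfolding P_def using assms(1) by (simp add: finite_PiE)
  moreover have "dl d q h h' \<le> (3 * w) powr q"
    if h: "h \<in> HL d L" "h' \<in> HL d L" "bin h = bin h'" for h h'
  proof (rule dl_leI)
    fix x assume x: "x \<in> cubeX d"
    then obtain g where g: "g \<in> G" "L * linf d x g \<le> w" using net by blast
    have "g \<in> cubeX d" using g(1) assms(2) by blast
    have "\<bar>h g / w - h' g / w\<bar> < 1"
      using fun_cong[OF h(3), of g] g(1) HL_range[OF h(1) \<open>g \<in> cubeX d\<close>] HL_range[OF h(2) \<open>g \<in> cubeX d\<close>]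
        assms(3) by (intro nat_floor_eq_imp_dist_less) (auto simp: bin_def)
    then have "\<bar>h g - h' g\<bar> < w"
      using assms(3) by (simp add: diff_divide_distrib[symmetric])
    moreover have "\<bar>h x - h g\<bar> \<le> w" "\<bar>h' x - h' g\<bar> \<le> w"
      using HL_lipschitz[OF _ x \<open>g \<in> cubeX d\<close>] h g(2) by (meson order_trans)+
    ultimately have "\<bar>h x - h' x\<bar> \<le> 3 * w" by linarith
    then show "lossq q (h x) (h' x) \<le> (3 * w) powr q"
      unfolding lossq_def using assms(4) by (intro powr_mono2) auto
  qed
  ultimately have "covnum d q L (HL d L) ((3 * w) powr q) \<le> of_nat (card P)"
    by (intro covnum_le_card_of_fibres[where p = bin]) auto
  also have "card P = (nat \<lfloor>1 / w\<rfloor> + 1) ^ card G"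
    unfolding P_def using assms(1) by (simp add: card_PiE)
  finally show ?thesis .
qed

lemma ln_le_powr_div:
  fixes y \<eta> :: real
  assumes "0 < y" "0 < \<eta>"
  shows "ln y \<le> y powr \<eta> / \<eta>"
proof -
  have "ln (y powr \<eta>) \<le> y powr \<eta> - 1" using assms by (intro ln_le_minus_one) simp
  then show ?thesis using assms by (simp add: field_simps)
qed

lemma log2_pattern_count_le:
  fixes L \<delta> \<eta> :: real
  assumes "1 \<le> L" "0 < \<delta>" "\<delta> \<le> 1" "0 < \<eta>"
  shows "log 2 (real ((nat \<lfloor>3 / \<delta>\<rfloor> + 1) ^ ((nat \<lceil>3 * L / \<delta>\<rceil> + 1) ^ d)))
         \<le> 5 ^ d * 4 powr \<eta> / (\<eta> * ln 2) * L ^ d * \<delta> powr (- (real d + \<eta>))"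
proof -
  define K where "K = nat \<lfloor>3 / \<delta>\<rfloor>"
  define m where "m = nat \<lceil>3 * L / \<delta>\<rceil>"
  have "1 \<le> L / \<delta>" "1 \<le> 1 / \<delta>" using assms(1-3) by (simp_all add: field_simps)
  have "real m \<le> 3 * L / \<delta> + 1"
    using assms(1,2) of_int_ceiling_le_add_one[of "3 * L / \<delta>"] unfolding m_def by simp
  moreover have "3 * L / \<delta> = 3 * (L / \<delta>)" by simp
  ultimately have m: "real m + 1 \<le> 5 * (L / \<delta>)" using \<open>1 \<le> L / \<delta>\<close> by linarith
  have "real K \<le> 3 / \<delta>" using assms(2) unfolding K_def by simp
  moreover have "3 / \<delta> = 3 * (1 / \<delta>)" "4 / \<delta> = 4 * (1 / \<delta>)" by simp_all
  ultimately have K: "real K + 1 \<le> 4 / \<delta>" using \<open>1 \<le> 1 / \<delta>\<close> by linarith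
  have "log 2 (real ((K + 1) ^ ((m + 1) ^ d))) = (real m + 1) ^ d * log 2 (real K + 1)"
    by (simp add: log_nat_power add.commute)
  also have "\<dots> \<le> (5 * (L / \<delta>)) ^ d * (ln (4 / \<delta>) / ln 2)"
  proof (rule mult_mono)
    show "(real m + 1) ^ d \<le> (5 * (L / \<delta>)) ^ d"
      using m by (intro power_mono) auto
    have "log 2 (real K + 1) \<le> log 2 (4 / \<delta>)"
      using K assms(2) by (intro log_le_cancel_iff[THEN iffD2]) auto
    then show "log 2 (real K + 1) \<le> ln (4 / \<delta>) / ln 2"
      by (simp add: log_def)
  qed (use assms in auto)
  also have "\<dots> \<le> (5 * (L / \<delta>)) ^ d * ((4 / \<delta>) powr \<eta> / \<eta> / ln 2)"
    using ln_le_powr_div[of "4 / \<delta>" \<eta>] assms by (intro mult_left_mono divide_right_mono) auto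
  also have "\<dots> = 5 ^ d * 4 powr \<eta> / (\<eta> * ln 2) * L ^ d * \<delta> powr (- (real d + \<eta>))"
  proof -
    have "\<delta> powr (- (real d + \<eta>)) = 1 / (\<delta> ^ d * \<delta> powr \<eta>)"
      using assms(2) by (subst powr_minus_divide) (simp add: powr_add powr_realpow)
    then show ?thesis using assms(2) by (simp only:) (simp add: powr_divide field_simps)
  qed
  finally show ?thesis unfolding K_def m_def .
qed

lemma log2N_covnum_HL_le:
  assumes "1 \<le> d" "1 \<le> L" "0 < \<eta>" "real d + \<eta> < q" "0 < e" "e \<le> 1"
  shows "log2N (covnum d q L (HL d L) e)
         \<le> ennreal (5 ^ d * 4 powr \<eta> / (\<eta> * ln 2) * L ^ d * e powr (- (real d + \<eta>) / q))"
proof -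
  have "0 < q" using assms(3,4) by linarith
  define \<delta> where "\<delta> = e powr (1 / q)"
  have \<delta>: "0 < \<delta>" "\<delta> \<le> 1" "\<delta> powr q = e"
    using assms(5,6) \<open>0 < q\<close> powr_mono2[of "1 / q" e 1] by (auto simp: \<delta>_def powr_powr)
  define m where "m = nat \<lceil>3 * L / \<delta>\<rceil>"
  have m: "3 * L / \<delta> \<le> real m" "0 < m"
    using assms(2) \<delta>(1) unfolding m_def by (linarith, simp)
  obtain G where G: "finite G" "G \<subseteq> cubeX d" "card G \<le> (m + 1) ^ d"
    and net: "\<forall>x\<in>cubeX d. \<exists>g\<in>G. linf d x g \<le> 1 / real m"
    using grid_net[OF assms(1) m(2)] by blast
  have "L * (1 / real m) \<le> \<delta> / 3"
    using m \<delta>(1) assms(2) by (simp add: field_simps)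
  have "\<forall>x\<in>cubeX d. \<exists>g\<in>G. L * linf d x g \<le> \<delta> / 3"
  proof
    fix x assume "x \<in> cubeX d"
    then obtain g where "g \<in> G" "linf d x g \<le> 1 / real m" using net by blast
    then have "L * linf d x g \<le> L * (1 / real m)" using assms(2) by (intro mult_left_mono) auto
    then show "\<exists>g\<in>G. L * linf d x g \<le> \<delta> / 3"
      using \<open>g \<in> G\<close> \<open>L * (1 / real m) \<le> \<delta> / 3\<close> by (meson order_trans)
  qed
  then have "covnum d q L (HL d L) e \<le> of_nat ((nat \<lfloor>3 / \<delta>\<rfloor> + 1) ^ card G)"
    using covnum_HL_le_quantized[OF G(1,2), of "\<delta> / 3" q L] \<delta> \<open>0 < q\<close> by simp
  also have "\<dots> \<le> of_nat ((nat \<lfloor>3 / \<delta>\<rfloor> + 1) ^ ((nat \<lceil>3 * L / \<delta>\<rceil> + 1) ^ d))"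
    using G(3) unfolding m_def by (intro of_nat_mono power_increasing) auto
  finally have "log2N (covnum d q L (HL d L) e)
      \<le> log2N (of_nat ((nat \<lfloor>3 / \<delta>\<rfloor> + 1) ^ ((nat \<lceil>3 * L / \<delta>\<rceil> + 1) ^ d)))"
    by (rule log2N_mono)
  also have "\<dots> = ennreal (log 2 (real ((nat \<lfloor>3 / \<delta>\<rfloor> + 1) ^ ((nat \<lceil>3 * L / \<delta>\<rceil> + 1) ^ d))))"
    by (rule log2N_of_nat)
  also have "\<dots> \<le> ennreal (5 ^ d * 4 powr \<eta> / (\<eta> * ln 2) * L ^ d * \<delta> powr (- (real d + \<eta>)))"
    using assms(2,3) \<delta>(1,2) by (intro ennreal_leI log2_pattern_count_le)
  also have "\<delta> powr (- (real d + \<eta>)) = e powr (- (real d + \<eta>) / q)"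
    unfolding \<delta>_def using assms(5) by (simp add: powr_powr)
  finally show ?thesis .
qed

lemma cover_entropy_HL_le:
  assumes "1 \<le> d" "1 \<le> L" "0 < \<eta>" "real d + \<eta> < q"
  shows "cover_entropy d q L (HL d L)
         \<le> ennreal (5 ^ d * 4 powr \<eta> / (\<eta> * ln 2) / (1 - (real d + \<eta>) / q) * L ^ d)"
proof -
  define K where "K = 5 ^ d * 4 powr \<eta> / (\<eta> * ln 2) * L ^ d"
  define \<beta> where "\<beta> = (real d + \<eta>) / q"
  have "0 < q" using assms(3,4) by linarith
  then have "\<beta> < 1" unfolding \<beta>_def using assms(4) by simp
  have "0 \<le> K" unfolding K_def using assms(2,3) by simp
  have "cover_entropy d q L (HL d L) \<le> (\<integral>\<^sup>+ e. ennreal (K * e powr (- \<beta>)) * indicator {0..1} e \<partial>lborel)"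
    unfolding cover_entropy_def
  proof (rule nn_integral_mono_AE)
    show "AE e in lborel. log2N (covnum d q L (HL d L) e) * indicator {0..1} e
              \<le> ennreal (K * e powr - \<beta>) * indicator {0..1} e"
      using AE_lborel_singleton[of 0]
    proof eventually_elim
      case (elim e)
      then show ?case
        using log2N_covnum_HL_le[OF assms, of e]
        by (cases "e \<in> {0..1}") (auto simp: K_def \<beta>_def minus_divide_left)
    qed
  qed
  also have "\<dots> = ennreal (K * (1 powr (- \<beta> + 1) / (- \<beta> + 1)))"
  proof (rule nn_integral_has_integral_lebesgue')
    show "((\<lambda>e. K * e powr (- \<beta>)) has_integral (K * (1 powr (- \<beta> + 1) / (- \<beta> + 1)))) {0..1}"
      using \<open>\<beta> < 1\<close> by (intro has_integral_mult_right has_integral_powr_from_0) auto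
  qed (use \<open>0 \<le> K\<close> in simp)
  also have "\<dots> = ennreal (5 ^ d * 4 powr \<eta> / (\<eta> * ln 2) / (1 - (real d + \<eta>) / q) * L ^ d)"
    by (simp add: K_def \<beta>_def)
  finally show ?thesis .
qed

theorem theoremA2:
  fixes d :: nat and q :: real
  assumes "d \<ge> 1" and "q > real d"
  shows "\<exists>C::real. \<forall>L::real. L \<ge> 1 \<longrightarrow>
           Phi d q L (HL d L) \<le> ennreal (C * L ^ d)
         \<and> Donl d q L \<le> ennreal (4 * 2 powr (q - 1) * C * L ^ d)"
proof (intro exI allI impI conjI)
  define \<eta> where "\<eta> = (q - real d) / 2"
  define C where "C = 5 ^ d * 4 powr \<eta> / (\<eta> * ln 2) / (1 - (real d + \<eta>) / q)"
  have \<eta>: "0 < \<eta>" "real d + \<eta> < q" and "0 < q" unfolding \<eta>_def using assms by (auto simp: field_simps)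
  then have "(real d + \<eta>) / q < 1" by simp
  then have "0 \<le> C" unfolding C_def using \<eta>(1) by simp
  fix L :: real assume "L \<ge> 1"
  have entropy: "cover_entropy d q L (HL d L) \<le> ennreal (C * L ^ d)"
    unfolding C_def using cover_entropy_HL_le[OF assms(1) \<open>L \<ge> 1\<close> \<eta>] .
  then show "Phi d q L (HL d L) \<le> ennreal (C * L ^ d)"
    using Phi_eq_cover_entropy assms(1) \<open>L \<ge> 1\<close> \<open>0 < q\<close> by simp
  have "Donl d q L \<le> ennreal (2 powr q) * ennreal (C * L ^ d)"
    using Donl_le_cover_entropy[OF \<open>0 < q\<close>] entropy by (meson mult_left_mono order_trans zero_le)
  also have "\<dots> = ennreal (2 powr q * (C * L ^ d))"
    by (simp add: ennreal_mult')
  also have "\<dots> \<le> ennreal (4 * 2 powr (q - 1) * C * L ^ d)"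
    using \<open>0 \<le> C\<close> \<open>L \<ge> 1\<close> by (intro ennreal_leI) (simp add: powr_diff)
  finally show "Donl d q L \<le> ennreal (4 * 2 powr (q - 1) * C * L ^ d)" .
qed

end
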